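(* Let $F:\mathbb R^n\to\mathbb R^n$ be monotone with $\|F(z)-F(z')\|\le\ell\|z-z'\|$ and $\|\partial F(z)-\partial F(z')\|_\sigma\le\Lambda\|z-z'\|$. Let $\eta>0$, $z^{(-1)},z^{(0)}\in\mathbb R^n$, $z^{(t+1)}=z^{(t)}-2\eta F(z^{(t)})+\eta F(z^{(t-1)})$, $w^{(t)}:=z^{(t)}+\eta F(z^{(t-1)})$, $A^{(t)}:=\int_0^1\partial F(w^{(t)}-(1-\alpha)\eta F(z^{(t)}))d\alpha$, $B^{(t)}:=\int_0^1\partial F(w^{(t)}-(1-\alpha)\eta F(z^{(t-1)}))d\alpha$. Fix an integer $T\ge1$, set $C^{(T)}:=0$ and recursively, for $t=T,T-1,\dots,0$, $C^{(t-1)}:=(I-\eta A^{(t)}+C^{(t)})^{-1}\,\eta(\eta A^{(t)}-C^{(t)})B^{(t)}$. Let $\delta^{(t)}:=\max\{\|F(z^{(t)})\|,\|F(z^{(t-1)})\|\}$. Suppose there is $L_0>0$ such that for all $0\le t\le T$, $\max\{\eta\|A^{(t)}\|_\sigma,\eta\|B^{(t)}\|_\sigma\}\le L_0\le\sqrt{1/200}$, and $\eta\ell\le2/3$. Then: 1. $\|C^{(t)}\|_\sigma\le 2L_0^2$ for each $t\in\{1,\dots,T\}$. 2. The matrices $C^{(t)}$ are well defined, i.e. $I-\eta A^{(t)}+C^{(t)}$ is invertible for each $t\in\{1,\dots,T\}$, and its inverse has spectral norm at most $\sqrt2$. 3. $\|\eta A^{(t)}-C^{(t)}\|_\sigma\le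 2L_0$ and $\|I-\eta A^{(t)}+C^{(t)}\|_\sigma\le1+2L_0$ for each $t\in\{1,\dots,T\}$. 4. For all $t<T$, $(I-\eta A^{(t+1)}+C^{(t+1)})^{-1}(\eta A^{(t+1)}-C^{(t+1)})(\eta A^{(t+1)}-C^{(t+1)})^\top(I-\eta A^{(t+1)}+C^{(t+1)})^{-\top}\preceq 3\big((\eta A^{(t+1)})(\eta A^{(t+1)})^\top+C^{(t+1)}(C^{(t+1)})^\top\big)$. 5. For all $t<T$, $C^{(t)}(C^{(t)})^\top\preceq J_1\,(\eta A^{(t)})(\eta A^{(t)})^\top+J_2(\delta^{(t)})^2 I$, where $J_1=8L_0^2$ and $J_2=30L_0^2\eta^2(\eta\Lambda)^2$.
   Context: $F$ monotone means $\langle F(z')-F(z),z'-z\rangle\ge0$ for all $z,z'$. $\partial F$ is the Jacobian; $\|\cdot\|_\sigma$ the spectral norm; $M^{-\top}:=(M^{-1})^\top$; $S\preceq T$ means $T-S$ is positive semidefinite. *)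

theory Defs
  imports "HOL-Analysis.Analysis"
begin

definition spec_norm :: "real^'n^'n \<Rightarrow> real" where
  "spec_norm M = onorm (\<lambda>x. M *v x)"

definition psd :: "real^'n^'n \<Rightarrow> bool" where
  "psd M \<longleftrightarrow> (\<forall>x. 0 \<le> x \<bullet> (M *v x))"

definition loewner_le :: "real^'n^'n \<Rightarrow> real^'n^'n \<Rightarrow> bool" where
  "loewner_le S T \<longleftrightarrow> psd (T - S)"

end

theory Submission
  imports Defs
begin

text \<open>
  Put \<open>Y\<^sub>t = \<eta>A\<^sub>t\<close> and \<open>X\<^sub>t = Y\<^sub>t - C\<^sub>t\<close>, so that \<open>C\<^sub>t\<^sub>-\<^sub>1 = (I - X\<^sub>t)\<^sup>-\<^sup>1 X\<^sub>t \<eta>B\<^sub>t\<close>.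
  Backward induction from \<open>C\<^sub>T = 0\<close> keeps \<open>\<parallel>C\<^sub>t\<parallel> \<le> 2L\<^sub>0\<^sup>2\<close>: then \<open>\<parallel>X\<^sub>t\<parallel> \<le> 1/12\<close>, and the
  Neumann series bound \<open>\<parallel>(I - X\<^sub>t)\<^sup>-\<^sup>1\<parallel> \<le> 12/11\<close> closes the induction. Since \<open>(I - X\<^sub>t)\<^sup>-\<^sup>1\<close>
  commutes with \<open>X\<^sub>t\<close>, the matrix in item 4 is the Gram matrix of \<open>X\<^sub>t(I - X\<^sub>t)\<^sup>-\<^sup>1\<close>, whose
  quadratic form is at most \<open>(12/11)\<^sup>2(\<parallel>Y\<^sub>t\<^sup>Tx\<parallel> + \<parallel>C\<^sub>t\<^sup>Tx\<parallel>)\<^sup>2\<close>.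

  For item 5 a second backward induction writes \<open>C\<^sub>t = Y\<^sub>t Q\<^sub>t + R\<^sub>t\<close> with \<open>\<parallel>Q\<^sub>t\<parallel> \<le> 6L\<^sub>0/5\<close> and
  \<open>\<parallel>R\<^sub>t\<parallel> \<le> 24L\<^sub>0s\<^sub>t/5\<close>, where \<open>s\<^sub>t = \<eta>\<^sup>2\<Lambda>\<delta>\<^sub>t\<close>: because \<open>\<eta>\<ell> \<le> 2/3\<close>, one step of the iteration moves
  the averaged Jacobian \<open>\<eta>A\<close> by at most \<open>3s\<^sub>t\<close> and multiplies \<open>\<delta>\<close> by at most 3. Young's
  inequality turns the decomposition into the Loewner bound.
\<close>

subsection \<open>Spectral norm\<close>

lemma spec_norm_mult_vec: "norm (M *v x) \<le> spec_norm M * norm x"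
  unfolding spec_norm_def by (rule onorm) simp

lemma spec_norm_le:
  assumes "\<And>x. norm (M *v x) \<le> b * norm x"
  shows "spec_norm M \<le> b"
  unfolding spec_norm_def using assms by (rule onorm_le)

lemma spec_norm_nonneg: "0 \<le> spec_norm M"
  unfolding spec_norm_def by (rule onorm_pos_le) simp

lemma spec_norm_0 [simp]: "spec_norm (0 :: real^'n^'n) = 0"
proof -
  have "(*v) (0 :: real^'n^'n) = (\<lambda>x. 0)" by (simp add: fun_eq_iff)
  then show ?thesis unfolding spec_norm_def by (metis onorm_zero)
qed

lemma spec_norm_mat_1 [simp]: "spec_norm (mat 1 :: real^'n^'n) = 1"
proof -
  have "(*v) (mat 1 :: real^'n^'n) = (\<lambda>x. x)" by (simp add: fun_eq_iff)
  then show ?thesis unfolding spec_norm_def by (simp add: onorm_id)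
qed

lemma spec_norm_uminus [simp]: "spec_norm (- M) = spec_norm M"
proof -
  have "(*v) (- M) = (\<lambda>x. - (M *v x))"
    by (simp add: fun_eq_iff vec_eq_iff matrix_vector_mult_def sum_negf)
  then show ?thesis unfolding spec_norm_def by (simp add: onorm_neg)
qed

lemma spec_norm_mult: "spec_norm (M ** N) \<le> spec_norm M * spec_norm N"
proof -
  have "(*v) (M ** N) = (*v) M \<circ> (*v) N" by (simp add: fun_eq_iff matrix_vector_mul_assoc)
  then show ?thesis
    unfolding spec_norm_def by (simp add: onorm_compose)
qed

lemma spec_norm_mult_le:
  assumes "spec_norm M \<le> a" and "spec_norm N \<le> b"
  shows "spec_norm (M ** N) \<le> a * b"
  using spec_norm_mult[of M N] assms by (meson mult_mono order_trans spec_norm_nonneg)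

lemma spec_norm_add: "spec_norm (M + N) \<le> spec_norm M + spec_norm N"
proof -
  have "(*v) (M + N) = (\<lambda>x. M *v x + N *v x)" by (simp add: fun_eq_iff matrix_vector_mult_add_rdistrib)
  then show ?thesis
    unfolding spec_norm_def by (simp add: onorm_triangle)
qed

lemma spec_norm_diff: "spec_norm (M - N) \<le> spec_norm M + spec_norm N"
  using spec_norm_add[of M "- N"] by simp

lemma spec_norm_scaleR: "spec_norm (c *\<^sub>R M) = \<bar>c\<bar> * spec_norm M"
proof -
  have "(*v) (c *\<^sub>R M) = (\<lambda>x. c *\<^sub>R (M *v x))" by (simp add: fun_eq_iff scaleR_matrix_vector_assoc)
  then show ?thesis unfolding spec_norm_def by (simp add: onorm_scaleR)
qed

lemma inner_matrix_vector_mult: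
  fixes M :: "real^'n^'m"
  shows "x \<bullet> (M *v y) = (transpose M *v x) \<bullet> y"
  by (simp add: dot_lmul_matrix)

lemma spec_norm_transpose_mult_vec: "norm (transpose M *v x) \<le> spec_norm M * norm x"
proof -
  let ?v = "transpose M *v x"
  have "(norm ?v)\<^sup>2 = x \<bullet> (M *v ?v)"
    by (simp add: power2_norm_eq_inner inner_matrix_vector_mult)
  also have "\<dots> \<le> norm x * norm (M *v ?v)"
    by (rule Cauchy_Schwarz_ineq2[THEN order_trans[OF abs_ge_self]])
  also have "\<dots> \<le> norm x * (spec_norm M * norm ?v)"
    by (simp add: mult_left_mono spec_norm_mult_vec)
  finally have "norm ?v * norm ?v \<le> (spec_norm M * norm x) * norm ?v"
    by (simp add: power2_eq_square algebra_simps)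
  then show ?thesis
    by (cases "norm ?v = 0") (auto simp: spec_norm_nonneg)
qed

lemma norm_le_card_spec_norm:
  fixes M :: "real^'n^'n"
  shows "norm M \<le> real CARD('n) * spec_norm M"
proof -
  have row: "norm (M $ i) \<le> spec_norm M" for i
  proof -
    have "M $ i = transpose M *v axis i 1"
      by (simp add: vec_eq_iff transpose_def matrix_vector_mult_def axis_def
          if_distrib[where f="\<lambda>c. _ * c"] cong: if_cong)
    then show ?thesis using spec_norm_transpose_mult_vec[of M "axis i 1"] by simp
  qed
  have "norm M \<le> (\<Sum>i\<in>UNIV. norm (M $ i))" by (simp add: norm_vec_def L2_set_le_sum)
  also have "\<dots> \<le> (\<Sum>i\<in>(UNIV::'n set). spec_norm M)" by (intro sum_mono row)
  finally show ?thesis by simp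
qed

subsection \<open>Matrix algebra and perturbed identities\<close>

lemma matrix_add_rdistrib: "(A + B) ** C = A ** C + B ** (C :: 'a::semiring_1^'p^'n)"
  by (vector matrix_matrix_mult_def sum.distrib[symmetric] distrib_right)

lemma matrix_diff_ldistrib: "A ** (B - C) = A ** B - A ** (C :: 'a::ring_1^'p^'n)"
  by (vector matrix_matrix_mult_def sum_subtractf[symmetric] right_diff_distrib)

lemma matrix_diff_rdistrib: "(A - B) ** C = A ** C - B ** (C :: 'a::ring_1^'p^'n)"
  by (vector matrix_matrix_mult_def sum_subtractf[symmetric] left_diff_distrib)

lemma transpose_add: "transpose (A + B) = transpose A + transpose (B :: 'a::semiring_1^'n^'m)"
  by (vector transpose_def)

lemma transpose_diff: "transpose (A - B) = transpose A - transpose (B :: 'a::ab_group_add^'n^'m)"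
  by (vector transpose_def)

lemma matrix_inv_right: "invertible A \<Longrightarrow> A ** matrix_inv A = mat 1"
  and matrix_inv_left: "invertible A \<Longrightarrow> matrix_inv A ** A = mat 1"
  unfolding invertible_def matrix_inv_def by (metis (mono_tags, lifting) someI_ex)+

lemma matrix_inv_commute:
  assumes "invertible A" and "A ** X = X ** A"
  shows "matrix_inv A ** X = X ** matrix_inv A"
proof -
  let ?A' = "matrix_inv A"
  have "?A' ** X = ?A' ** X ** (A ** ?A')"
    using matrix_inv_right[OF assms(1)] by simp
  also have "\<dots> = ?A' ** (A ** X) ** ?A'"
    by (simp add: assms(2) matrix_mul_assoc)
  also have "\<dots> = X ** ?A'"
    using matrix_inv_left[OF assms(1)] by (simp add: matrix_mul_assoc)
  finally show ?thesis .
qed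

lemma diff_mult_eq_shifted:
  fixes Y Y' Q R W :: "'a::comm_ring_1^'n^'n"
  assumes "C = Y' ** Q + R"
  shows "(Y' - C) ** W = Y ** ((mat 1 - Q) ** W) + ((Y' - Y) ** (mat 1 - Q) - R) ** W"
  unfolding assms
  by (simp add: matrix_diff_ldistrib matrix_diff_rdistrib matrix_add_rdistrib matrix_mul_assoc algebra_simps)

lemma norm_mat_1_minus_mult_vec_ge:
  assumes "spec_norm X \<le> k"
  shows "(1 - k) * norm v \<le> norm ((mat 1 - X) *v v)"
proof -
  have "norm v \<le> norm ((mat 1 - X) *v v) + norm (X *v v)"
    using norm_triangle_ineq[of "(mat 1 - X) *v v" "X *v v"]
    by (simp add: matrix_vector_mult_diff_rdistrib)
  moreover have "norm (X *v v) \<le> k * norm v"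
    using spec_norm_mult_vec[of X v] mult_right_mono[OF assms norm_ge_zero[of v]] by linarith
  ultimately show ?thesis by (simp add: algebra_simps)
qed

lemma invertible_mat_1_minus:
  fixes X :: "real^'n^'n"
  assumes "spec_norm X < 1"
  shows "invertible (mat 1 - X)"
proof -
  have "inj ((*v) (mat 1 - X))"
  proof (rule injI)
    fix a b assume "(mat 1 - X) *v a = (mat 1 - X) *v b"
    then have "(1 - spec_norm X) * norm (a - b) \<le> 0"
      using norm_mat_1_minus_mult_vec_ge[of X _ "a - b"] by (simp add: matrix_vector_mult_diff_distrib)
    then show "a = b" using assms by (simp add: mult_le_0_iff)
  qed
  then show ?thesis
    using matrix_left_invertible_injective invertible_left_inverse by blast
qed

lemma spec_norm_matrix_inv_mat_1_minus:
  fixes X :: "real^'n^'n"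
  assumes "spec_norm X \<le> k" and "k < 1"
  shows "spec_norm (matrix_inv (mat 1 - X)) \<le> 1 / (1 - k)"
proof (rule spec_norm_le)
  fix y :: "real^'n"
  have "spec_norm X < 1" using assms by linarith
  then have "(mat 1 - X) *v (matrix_inv (mat 1 - X) *v y) = y"
    by (simp add: matrix_inv_right invertible_mat_1_minus matrix_vector_mul_assoc)
  then have "(1 - k) * norm (matrix_inv (mat 1 - X) *v y) \<le> norm y"
    using norm_mat_1_minus_mult_vec_ge[OF assms(1)] by metis
  then show "norm (matrix_inv (mat 1 - X) *v y) \<le> 1 / (1 - k) * norm y"
    using assms(2) by (simp add: field_simps)
qed

subsection \<open>Loewner order\<close>

lemma loewner_le_iff: "loewner_le S T \<longleftrightarrow> (\<forall>x. x \<bullet> (S *v x) \<le> x \<bullet> (T *v x))"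
  unfolding loewner_le_def psd_def by (simp add: matrix_vector_mult_diff_rdistrib inner_diff_right)

lemma inner_mult_transpose_self:
  fixes M :: "real^'n^'m"
  shows "x \<bullet> ((M ** transpose M) *v x) = (norm (transpose M *v x))\<^sup>2"
  by (simp add: matrix_vector_mul_assoc[symmetric] inner_matrix_vector_mult power2_norm_eq_inner)

lemma square_sum_le_weighted:
  fixes u v \<epsilon> :: real
  assumes "0 < \<epsilon>"
  shows "(u + v)\<^sup>2 \<le> (1 + \<epsilon>) * u\<^sup>2 + (1 + 1 / \<epsilon>) * v\<^sup>2"
proof -
  have "0 \<le> (\<epsilon> * u - v)\<^sup>2 / \<epsilon>" using assms by simp
  also have "\<dots> = (1 + \<epsilon>) * u\<^sup>2 + (1 + 1 / \<epsilon>) * v\<^sup>2 - (u + v)\<^sup>2"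
    using assms by (simp add: field_simps power2_eq_square)
  finally show ?thesis by simp
qed

lemma loewner_le_gram:
  fixes M Y Z :: "real^'n^'n"
  assumes bound: "\<And>x. norm (transpose M *v x) \<le> q * norm (transpose Y *v x) + r * norm (transpose Z *v x)"
    and "0 \<le> q" "0 \<le> r" "0 < \<epsilon>" "(1 + \<epsilon>) * q\<^sup>2 \<le> a" "(1 + 1 / \<epsilon>) * r\<^sup>2 \<le> b"
  shows "loewner_le (M ** transpose M) (a *\<^sub>R (Y ** transpose Y) + b *\<^sub>R (Z ** transpose Z))"
  unfolding loewner_le_iff
proof
  fix x :: "real^'n"
  let ?u = "norm (transpose Y *v x)" and ?v = "norm (transpose Z *v x)"
  have "x \<bullet> ((M ** transpose M) *v x) \<le> (q * ?u + r * ?v)\<^sup>2"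
    unfolding inner_mult_transpose_self by (rule power_mono[OF bound norm_ge_zero])
  also have "\<dots> \<le> ((1 + \<epsilon>) * q\<^sup>2) * ?u\<^sup>2 + ((1 + 1 / \<epsilon>) * r\<^sup>2) * ?v\<^sup>2"
    using square_sum_le_weighted[OF \<open>0 < \<epsilon>\<close>, of "q * ?u" "r * ?v"] by (simp add: power_mult_distrib)
  also have "\<dots> \<le> a * ?u\<^sup>2 + b * ?v\<^sup>2"
    using assms by (intro add_mono mult_right_mono) auto
  also have "\<dots> = x \<bullet> ((a *\<^sub>R (Y ** transpose Y) + b *\<^sub>R (Z ** transpose Z)) *v x)"
    by (simp add: matrix_vector_mult_add_rdistrib scaleR_matrix_vector_assoc[symmetric]
        inner_add_right inner_mult_transpose_self)
  finally show "x \<bullet> ((M ** transpose M) *v x) \<le> x \<bullet> ((a *\<^sub>R (Y ** transpose Y) + b *\<^sub>R (Z ** transpose Z)) *v x)" .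
qed

subsection \<open>Integrals of Lipschitz matrix fields\<close>

lemma bounded_linear_matrix_vector_mult_left: "bounded_linear (\<lambda>M :: real^'n^'m. M *v x)"
proof -
  have "linear (\<lambda>M :: real^'n^'m. M *v x)"
    by (rule linearI) (simp_all add: matrix_vector_mult_add_rdistrib scaleR_matrix_vector_assoc)
  then show ?thesis by (simp add: linear_conv_bounded_linear)
qed

lemma lipschitz_constant_nonneg:
  fixes d :: "real^'n \<Rightarrow> real^'n \<Rightarrow> real"
  assumes "\<And>u v. 0 \<le> d u v" and "\<And>u v. d u v \<le> K * norm (u - v)"
  shows "0 \<le> K"
proof -
  have "0 \<le> K * norm (axis undefined 1 - 0 :: real^'n)"
    using assms order_trans by blast
  then show ?thesis by simp
qed

lemma spec_norm_lipschitz_continuous_on: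
  fixes G :: "'a::real_normed_vector \<Rightarrow> real^'n^'n"
  assumes "\<And>u v. spec_norm (G u - G v) \<le> K * norm (u - v)"
  shows "continuous_on S G"
proof (rule lipschitz_on_continuous_on[OF lipschitz_onI])
  fix u v
  have "dist (G u) (G v) \<le> real CARD('n) * spec_norm (G u - G v)"
    by (simp add: dist_norm norm_le_card_spec_norm)
  also have "\<dots> \<le> real CARD('n) * (max K 0 * norm (u - v))"
    using assms[of u v] by (intro mult_left_mono) (auto intro: order_trans[OF _ mult_right_mono])
  finally show "dist (G u) (G v) \<le> real CARD('n) * max K 0 * dist u v"
    by (simp add: dist_norm mult.assoc)
qed simp

lemma spec_norm_integral_le:
  fixes g :: "real \<Rightarrow> real^'n^'n"
  assumes "continuous_on {a..b} g" and "a \<le> b" and "\<And>t. t \<in> {a..b} \<Longrightarrow> spec_norm (g t) \<le> K"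
  shows "spec_norm (integral {a..b} g) \<le> K * (b - a)"
proof (rule spec_norm_le)
  fix x :: "real^'n"
  have "integral {a..b} g *v x = integral {a..b} (\<lambda>t. g t *v x)"
    using integral_linear[OF integrable_continuous_real[OF assms(1)] bounded_linear_matrix_vector_mult_left]
    by (simp add: o_def)
  also have "norm \<dots> \<le> K * norm x * (b - a)"
  proof (rule integral_bound[OF \<open>a \<le> b\<close>])
    show "continuous_on {a..b} (\<lambda>t. g t *v x)"
      using continuous_on_compose[OF assms(1) linear_continuous_on[OF bounded_linear_matrix_vector_mult_left]]
      by (simp add: o_def)
    show "norm (g t *v x) \<le> K * norm x" if "t \<in> {a..b}" for t
      using spec_norm_mult_vec[of "g t" x] mult_right_mono[OF assms(3)[OF that] norm_ge_zero[of x]]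
      by linarith
  qed
  finally show "norm (integral {a..b} g *v x) \<le> K * (b - a) * norm x"
    by (simp add: algebra_simps)
qed

lemma spec_norm_integral_diff_le:
  fixes G :: "'a::real_normed_vector \<Rightarrow> real^'n^'n"
  assumes lip: "\<And>u v. spec_norm (G u - G v) \<le> K * norm (u - v)" and "0 \<le> K"
    and "continuous_on {a..b} p" and "continuous_on {a..b} q" and "a \<le> b"
    and dist: "\<And>\<alpha>. \<alpha> \<in> {a..b} \<Longrightarrow> norm (p \<alpha> - q \<alpha>) \<le> D"
  shows "spec_norm (integral {a..b} (\<lambda>\<alpha>. G (p \<alpha>)) - integral {a..b} (\<lambda>\<alpha>. G (q \<alpha>))) \<le> K * D * (b - a)"
proof -
  have Gp: "continuous_on {a..b} (\<lambda>\<alpha>. G (p \<alpha>))" and Gq: "continuous_on {a..b} (\<lambda>\<alpha>. G (q \<alpha>))"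
    using assms(3,4) spec_norm_lipschitz_continuous_on[OF lip]
    by (auto intro: continuous_on_compose2[of UNIV G])
  then have cont: "continuous_on {a..b} (\<lambda>\<alpha>. G (p \<alpha>) - G (q \<alpha>))"
    by (rule continuous_on_diff)
  have "integral {a..b} (\<lambda>\<alpha>. G (p \<alpha>)) - integral {a..b} (\<lambda>\<alpha>. G (q \<alpha>))
      = integral {a..b} (\<lambda>\<alpha>. G (p \<alpha>) - G (q \<alpha>))"
    using Gp Gq by (simp add: integral_diff integrable_continuous_real)
  also have "spec_norm \<dots> \<le> K * D * (b - a)"
  proof (rule spec_norm_integral_le[OF cont \<open>a \<le> b\<close>])
    show "spec_norm (G (p \<alpha>) - G (q \<alpha>)) \<le> K * D" if "\<alpha> \<in> {a..b}" for \<alpha>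
      using lip[of "p \<alpha>" "q \<alpha>"] mult_left_mono[OF dist[OF that] \<open>0 \<le> K\<close>] by linarith
  qed
  finally show ?thesis .
qed

subsection \<open>The optimistic gradient iteration\<close>

lemma optimistic_step_bounds:
  fixes F :: "'a::real_normed_vector \<Rightarrow> 'a"
  assumes lip: "\<And>u v. norm (F u - F v) \<le> ell * norm (u - v)" and "0 \<le> ell"
    and step: "z' = z - (2 * \<eta>) *\<^sub>R F z + \<eta> *\<^sub>R F z_prev"
    and "0 \<le> \<eta>" and "\<eta> * ell \<le> 2 / 3"
    and "norm (F z) \<le> d" and "norm (F z_prev) \<le> d"
  shows "norm (z' - z) \<le> 3 * \<eta> * d" and "norm (F z' - F z) \<le> 2 * d"
proof -
  have "z' - z = \<eta> *\<^sub>R F z_prev - (2 * \<eta>) *\<^sub>R F z"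
    using step by simp
  then have "norm (z' - z) \<le> \<eta> * norm (F z_prev) + 2 * \<eta> * norm (F z)"
    using norm_triangle_ineq4[of "\<eta> *\<^sub>R F z_prev" "(2 * \<eta>) *\<^sub>R F z"] \<open>0 \<le> \<eta>\<close> by simp
  also have "\<dots> \<le> \<eta> * d + 2 * \<eta> * d"
    using assms(4,6,7) by (intro add_mono mult_left_mono) auto
  finally show dz: "norm (z' - z) \<le> 3 * \<eta> * d" by simp
  have "norm (F z' - F z) \<le> ell * (3 * \<eta> * d)"
    using lip[of z' z] mult_left_mono[OF dz \<open>0 \<le> ell\<close>] by linarith
  also have "\<dots> = 3 * d * (\<eta> * ell)" by simp
  also have "\<dots> \<le> 3 * d * (2 / 3)"
    using assms(5,6) norm_ge_zero[of "F z"] by (intro mult_left_mono) linarith+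
  finally show "norm (F z' - F z) \<le> 2 * d" by simp
qed

lemma interpolation_points_dist:
  fixes g g' w w' :: "'a::real_normed_vector"
  assumes "w' - w = - (\<eta> *\<^sub>R g)" and "0 \<le> \<eta>" and "\<alpha> \<in> {0..1}"
    and "norm g \<le> d" and "norm (g' - g) \<le> 2 * d"
  shows "norm ((w' - ((1 - \<alpha>) * \<eta>) *\<^sub>R g') - (w - ((1 - \<alpha>) * \<eta>) *\<^sub>R g)) \<le> 3 * \<eta> * d"
proof -
  have "(w' - ((1 - \<alpha>) * \<eta>) *\<^sub>R g') - (w - ((1 - \<alpha>) * \<eta>) *\<^sub>R g)
      = - (\<eta> *\<^sub>R g) - ((1 - \<alpha>) * \<eta>) *\<^sub>R (g' - g)"
    using assms(1) by (simp add: algebra_simps)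
  then have "norm ((w' - ((1 - \<alpha>) * \<eta>) *\<^sub>R g') - (w - ((1 - \<alpha>) * \<eta>) *\<^sub>R g))
      \<le> \<eta> * norm g + ((1 - \<alpha>) * \<eta>) * norm (g' - g)"
    using norm_triangle_ineq4[of "- (\<eta> *\<^sub>R g)" "((1 - \<alpha>) * \<eta>) *\<^sub>R (g' - g)"] assms(2,3)
    by (simp add: abs_of_nonneg)
  also have "\<dots> \<le> \<eta> * d + (1 * \<eta>) * (2 * d)"
    using assms(2-5) by (intro add_mono mult_mono mult_left_mono) auto
  finally show ?thesis by simp
qed

lemma optimistic_iteration_increments:
  fixes F :: "real^'n \<Rightarrow> real^'n" and DF :: "real^'n \<Rightarrow> real^'n^'n"
    and z w :: "int \<Rightarrow> real^'n" and A :: "int \<Rightarrow> real^'n^'n" and \<delta> :: "int \<Rightarrow> real"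
  assumes lip: "\<forall>u v. norm (F u - F v) \<le> ell * norm (u - v)"
    and jac_lip: "\<forall>u v. spec_norm (DF u - DF v) \<le> Lam * norm (u - v)"
    and eta: "\<eta> > 0" and eta_ell: "\<eta> * ell \<le> 2 / 3"
    and z_rec: "\<forall>t\<ge>0. z (t + 1) = z t - (2 * \<eta>) *\<^sub>R F (z t) + \<eta> *\<^sub>R F (z (t - 1))"
    and w_def: "\<forall>t\<ge>0. w t = z t + \<eta> *\<^sub>R F (z (t - 1))"
    and A_def: "\<forall>t\<ge>0. A t = integral {0..1} (\<lambda>\<alpha>. DF (w t - ((1 - \<alpha>) * \<eta>) *\<^sub>R F (z t)))"
    and \<delta>_def: "\<forall>t\<ge>0. \<delta> t = max (norm (F (z t))) (norm (F (z (t - 1))))"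
    and "0 \<le> t"
  shows "\<delta> (t + 1) \<le> 3 * \<delta> t" and "spec_norm (A (t + 1) - A t) \<le> 3 * \<eta> * Lam * \<delta> t"
proof -
  have ell: "0 \<le> ell"
    by (rule lipschitz_constant_nonneg[of "\<lambda>u v. norm (F u - F v)"]) (use lip in auto)
  have Lam: "0 \<le> Lam"
    by (rule lipschitz_constant_nonneg[of "\<lambda>u v. spec_norm (DF u - DF v)"])
      (use jac_lip in \<open>auto simp: spec_norm_nonneg\<close>)
  have \<delta>: "norm (F (z t)) \<le> \<delta> t" "norm (F (z (t - 1))) \<le> \<delta> t"
    using \<delta>_def \<open>0 \<le> t\<close> by auto
  note step = optimistic_step_bounds[OF lip[rule_format] ell z_rec[rule_format, OF \<open>0 \<le> t\<close>]
      less_imp_le[OF eta] eta_ell \<delta>]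
  have "norm (F (z (t + 1))) \<le> 3 * \<delta> t"
    using step(2) \<delta>(1) norm_triangle_sub[of "F (z (t + 1))" "F (z t)"] by linarith
  moreover have "norm (F (z t)) \<le> 3 * \<delta> t"
    using \<delta>(1) norm_ge_zero[of "F (z t)"] by linarith
  ultimately show "\<delta> (t + 1) \<le> 3 * \<delta> t"
    using \<delta>_def \<open>0 \<le> t\<close> by simp
  define p where "p \<alpha> = w (t + 1) - ((1 - \<alpha>) * \<eta>) *\<^sub>R F (z (t + 1))" for \<alpha>
  define q where "q \<alpha> = w t - ((1 - \<alpha>) * \<eta>) *\<^sub>R F (z t)" for \<alpha>
  have A_eq: "A (t + 1) = integral {0..1} (\<lambda>\<alpha>. DF (p \<alpha>))" "A t = integral {0..1} (\<lambda>\<alpha>. DF (q \<alpha>))"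
    using A_def \<open>0 \<le> t\<close> by (simp_all add: p_def q_def)
  have "w (t + 1) - w t = z (t + 1) - z t + \<eta> *\<^sub>R F (z t) - \<eta> *\<^sub>R F (z (t - 1))"
    using w_def \<open>0 \<le> t\<close> by simp
  also have "\<dots> = \<eta> *\<^sub>R F (z t) - (2 * \<eta>) *\<^sub>R F (z t)"
    using z_rec \<open>0 \<le> t\<close> by simp
  finally have w_step: "w (t + 1) - w t = - (\<eta> *\<^sub>R F (z t))"
    by (simp add: scaleR_left_diff_distrib[symmetric])
  have "norm (p \<alpha> - q \<alpha>) \<le> 3 * \<eta> * \<delta> t" if "\<alpha> \<in> {0..1}" for \<alpha>
    unfolding p_def q_def by (rule interpolation_points_dist[OF w_step less_imp_le[OF eta] that \<delta>(1) step(2)])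
  then have "spec_norm (A (t + 1) - A t) \<le> Lam * (3 * \<eta> * \<delta> t) * (1 - 0)"
    unfolding A_eq using Lam
    by (intro spec_norm_integral_diff_le[OF jac_lip[rule_format]]) (auto simp: p_def q_def intro!: continuous_intros)
  then show "spec_norm (A (t + 1) - A t) \<le> 3 * \<eta> * Lam * \<delta> t" by (simp add: mult_ac)
qed

subsection \<open>The backward matrix recursion\<close>

lemma int_le_down_induct [consumes 2, case_names base step]:
  fixes lo t T :: int
  assumes "lo \<le> t" and "t \<le> T" and "P T"
    and "\<And>i. lo \<le> i \<Longrightarrow> i < T \<Longrightarrow> P (i + 1) \<Longrightarrow> P i"
  shows "P t"
proof -
  have "lo \<le> t \<longrightarrow> P t"
    using \<open>t \<le> T\<close> by (induction t rule: int_le_induct) (use assms(3,4) in \<open>force+\<close>)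
  then show ?thesis using assms(1) by blast
qed

lemma near_identity_bounds:
  fixes Y C :: "real^'n^'n"
  assumes "spec_norm Y \<le> L" and "spec_norm C \<le> 2 * L\<^sup>2" and "0 \<le> L" and "L \<le> 1/14"
  shows "spec_norm (Y - C) \<le> L + 2 * L\<^sup>2"
    and "invertible (mat 1 - Y + C)"
    and "spec_norm (matrix_inv (mat 1 - Y + C)) \<le> 12/11"
    and "matrix_inv (mat 1 - Y + C) ** (Y - C) = (Y - C) ** matrix_inv (mat 1 - Y + C)"
proof -
  show X: "spec_norm (Y - C) \<le> L + 2 * L\<^sup>2"
    using spec_norm_diff[of Y C] assms(1,2) by linarith
  have "L * L \<le> L * (1/14)"
    using assms(3,4) by (rule mult_left_mono[rotated])
  then have small: "spec_norm (Y - C) \<le> 1/12"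
    using X assms(4) by (simp add: power2_eq_square)
  have eq: "mat 1 - Y + C = mat 1 - (Y - C)" by simp
  show inv: "invertible (mat 1 - Y + C)"
    unfolding eq using small by (intro invertible_mat_1_minus) simp
  show "spec_norm (matrix_inv (mat 1 - Y + C)) \<le> 12/11"
    unfolding eq using spec_norm_matrix_inv_mat_1_minus[OF small] by simp
  have "(mat 1 - Y + C) ** (Y - C) = (Y - C) ** (mat 1 - Y + C)"
    unfolding eq by (simp add: matrix_diff_ldistrib matrix_diff_rdistrib)
  then show "matrix_inv (mat 1 - Y + C) ** (Y - C) = (Y - C) ** matrix_inv (mat 1 - Y + C)"
    by (rule matrix_inv_commute[OF inv])
qed

locale matrix_backward_recursion =
  fixes Y B C :: "int \<Rightarrow> real^'n^'n" and T :: int and L :: real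
  assumes L_nonneg: "0 \<le> L" and L_small: "L \<le> 1/14"
    and Y_bound: "\<And>t. 0 \<le> t \<Longrightarrow> t \<le> T \<Longrightarrow> spec_norm (Y t) \<le> L"
    and B_bound: "\<And>t. 0 \<le> t \<Longrightarrow> t \<le> T \<Longrightarrow> spec_norm (B t) \<le> L"
    and C_last: "C T = 0"
    and C_rec: "\<And>t. 0 \<le> t \<Longrightarrow> t \<le> T \<Longrightarrow>
      C (t - 1) = matrix_inv (mat 1 - Y t + C t) ** ((Y t - C t) ** B t)"
begin

lemma L_square_le: "L * L \<le> L / 14"
  using mult_left_mono[OF L_small L_nonneg] by simp

lemma spec_norm_C:
  assumes "0 \<le> t" and "t \<le> T"
  shows "spec_norm (C t) \<le> 2 * L\<^sup>2"
  using assms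
proof (induction t rule: int_le_down_induct)
  case base
  show ?case using C_last by simp
next
  case (step i)
  then have i: "0 \<le> i + 1" "i + 1 \<le> T" by auto
  note bounds = near_identity_bounds[OF Y_bound[OF i] step.IH L_nonneg L_small]
  have "spec_norm (C i) \<le> 12/11 * ((L + 2 * L\<^sup>2) * L)"
    using C_rec[OF i] spec_norm_mult_le[OF bounds(3) spec_norm_mult_le[OF bounds(1) B_bound[OF i]]]
    by simp
  also have "\<dots> = 12/11 * L\<^sup>2 + 24/11 * (L * L\<^sup>2)"
    by (simp add: power2_eq_square algebra_simps)
  also have "\<dots> \<le> 2 * L\<^sup>2"
    using mult_right_mono[OF L_small zero_le_power2[of L]] zero_le_power2[of L] by linarith
  finally show ?case .
qed

lemma
  assumes "0 \<le> t" and "t \<le> T"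
  shows invertible_resolvent: "invertible (mat 1 - Y t + C t)"
    and spec_norm_resolvent_inv: "spec_norm (matrix_inv (mat 1 - Y t + C t)) \<le> 12/11"
    and resolvent_inv_commute:
      "matrix_inv (mat 1 - Y t + C t) ** (Y t - C t) = (Y t - C t) ** matrix_inv (mat 1 - Y t + C t)"
    and spec_norm_Y_minus_C: "spec_norm (Y t - C t) \<le> 2 * L"
    and spec_norm_resolvent: "spec_norm (mat 1 - Y t + C t) \<le> 1 + 2 * L"
proof -
  note bounds = near_identity_bounds[OF Y_bound[OF assms] spec_norm_C[OF assms] L_nonneg L_small]
  show "invertible (mat 1 - Y t + C t)"
    and "spec_norm (matrix_inv (mat 1 - Y t + C t)) \<le> 12/11"
    and "matrix_inv (mat 1 - Y t + C t) ** (Y t - C t) = (Y t - C t) ** matrix_inv (mat 1 - Y t + C t)"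
    using bounds by simp_all
  show X: "spec_norm (Y t - C t) \<le> 2 * L"
    using bounds(1) L_square_le L_nonneg by (simp add: power2_eq_square)
  have "mat 1 - Y t + C t = mat 1 - (Y t - C t)" by simp
  then show "spec_norm (mat 1 - Y t + C t) \<le> 1 + 2 * L"
    using spec_norm_diff[of "mat 1" "Y t - C t"] X by (simp only: spec_norm_mat_1)
qed

lemma resolvent_gram_loewner_le:
  assumes "0 \<le> t" and "t \<le> T"
  shows "loewner_le
      (matrix_inv (mat 1 - Y t + C t) ** (Y t - C t) ** transpose (Y t - C t)
        ** transpose (matrix_inv (mat 1 - Y t + C t)))
      (3 *\<^sub>R (Y t ** transpose (Y t) + C t ** transpose (C t)))"
proof -
  let ?P = "matrix_inv (mat 1 - Y t + C t)" and ?X = "Y t - C t"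
  have "?P ** ?X ** transpose ?X ** transpose ?P = (?P ** ?X) ** transpose (?P ** ?X)"
    by (simp add: matrix_transpose_mul matrix_mul_assoc)
  then have gram: "?P ** ?X ** transpose ?X ** transpose ?P = (?X ** ?P) ** transpose (?X ** ?P)"
    by (simp only: resolvent_inv_commute[OF assms])
  have "norm (transpose (?X ** ?P) *v x)
      \<le> 12/11 * norm (transpose (Y t) *v x) + 12/11 * norm (transpose (C t) *v x)" for x
  proof -
    have "norm (transpose (?X ** ?P) *v x)
        = norm (transpose ?P *v (transpose (Y t) *v x - transpose (C t) *v x))"
      by (simp add: matrix_transpose_mul matrix_vector_mul_assoc[symmetric] transpose_diff
          matrix_vector_mult_diff_rdistrib)
    also have "\<dots> \<le> 12/11 * norm (transpose (Y t) *v x - transpose (C t) *v x)"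
      using spec_norm_transpose_mult_vec[of ?P] spec_norm_resolvent_inv[OF assms]
      by (meson mult_right_mono norm_ge_zero order_trans)
    also have "\<dots> \<le> 12/11 * (norm (transpose (Y t) *v x) + norm (transpose (C t) *v x))"
      by (intro mult_left_mono norm_triangle_ineq4) simp
    finally show ?thesis by (simp add: algebra_simps)
  qed
  then have "loewner_le ((?X ** ?P) ** transpose (?X ** ?P))
      (3 *\<^sub>R (Y t ** transpose (Y t)) + 3 *\<^sub>R (C t ** transpose (C t)))"
    by (rule loewner_le_gram[where \<epsilon> = 1]) (auto simp: power2_eq_square)
  then show ?thesis by (simp add: gram scaleR_add_right)
qed

end

locale slowly_varying_backward_recursion = matrix_backward_recursion +
  fixes s :: "int \<Rightarrow> real"
  assumes s_nonneg: "\<And>t. 0 \<le> t \<Longrightarrow> 0 \<le> s t"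
    and s_growth: "\<And>t. 0 \<le> t \<Longrightarrow> t < T \<Longrightarrow> s (t + 1) \<le> 3 * s t"
    and Y_increment: "\<And>t. 0 \<le> t \<Longrightarrow> t < T \<Longrightarrow> spec_norm (Y (t + 1) - Y t) \<le> 3 * s t"
begin

lemma C_decomposition_step:
  assumes "0 \<le> j" and "j < T" and C_succ: "C (j + 1) = Y (j + 1) ** Q + R"
    and Q: "spec_norm Q \<le> 6/5 * L" and R: "spec_norm R \<le> 24/5 * L * s (j + 1)"
  shows "\<exists>Q' R'. C j = Y j ** Q' + R' \<and> spec_norm Q' \<le> 6/5 * L \<and> spec_norm R' \<le> 24/5 * L * s j"
proof -
  have i: "0 \<le> j + 1" "j + 1 \<le> T" using assms by auto
  let ?P = "matrix_inv (mat 1 - Y (j + 1) + C (j + 1))"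
  define W where "W = ?P ** B (j + 1)"
  have W: "spec_norm W \<le> 12/11 * L"
    unfolding W_def by (rule spec_norm_mult_le[OF spec_norm_resolvent_inv[OF i] B_bound[OF i]])
  have IQ: "spec_norm (mat 1 - Q) \<le> 1 + 6/5 * L"
    using spec_norm_diff[of "mat 1" Q] Q by simp
  have "C j = ?P ** ((Y (j + 1) - C (j + 1)) ** B (j + 1))"
    using C_rec[OF i] by simp
  also have "\<dots> = (Y (j + 1) - C (j + 1)) ** W"
    unfolding W_def by (simp add: matrix_mul_assoc resolvent_inv_commute[OF i])
  also have "\<dots> = Y j ** ((mat 1 - Q) ** W) + ((Y (j + 1) - Y j) ** (mat 1 - Q) - R) ** W"
    by (rule diff_mult_eq_shifted[OF C_succ])
  finally have decomposition:
    "C j = Y j ** ((mat 1 - Q) ** W) + ((Y (j + 1) - Y j) ** (mat 1 - Q) - R) ** W" .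
  have "spec_norm ((mat 1 - Q) ** W) \<le> (1 + 6/5 * L) * (12/11 * L)"
    by (rule spec_norm_mult_le[OF IQ W])
  also have "\<dots> \<le> 6/5 * L"
    using L_square_le L_nonneg by (simp add: algebra_simps)
  finally have Q': "spec_norm ((mat 1 - Q) ** W) \<le> 6/5 * L" .
  have "spec_norm R \<le> 24/5 * L * (3 * s j)"
    using R mult_left_mono[OF s_growth[OF assms(1,2)], of "24/5 * L"] L_nonneg by simp
  then have "spec_norm ((Y (j + 1) - Y j) ** (mat 1 - Q) - R) \<le> 3 * s j * (1 + 6/5 * L) + 24/5 * L * (3 * s j)"
    using spec_norm_diff[of "(Y (j + 1) - Y j) ** (mat 1 - Q)" R]
      spec_norm_mult_le[OF Y_increment[OF assms(1,2)] IQ] by linarith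
  from spec_norm_mult_le[OF this W]
  have "spec_norm (((Y (j + 1) - Y j) ** (mat 1 - Q) - R) ** W)
      \<le> 36/11 * (L * s j) + 216/11 * (L * L * s j)"
    by (simp add: algebra_simps)
  also have "\<dots> \<le> 24/5 * L * s j"
  proof -
    have "L * L * s j \<le> (L * s j) / 14"
      using mult_right_mono[OF L_square_le s_nonneg[OF assms(1)]] by simp
    moreover have "0 \<le> L * s j"
      using L_nonneg s_nonneg[OF assms(1)] by simp
    ultimately show ?thesis by linarith
  qed
  finally show ?thesis using decomposition Q' by blast
qed

lemma C_decomposition:
  assumes "0 \<le> t" and "t \<le> T"
  obtains Q R where "C t = Y t ** Q + R" and "spec_norm Q \<le> 6/5 * L" and "spec_norm R \<le> 24/5 * L * s t"
proof -
  from assms have "\<exists>Q R. C t = Y t ** Q + R \<and> spec_norm Q \<le> 6/5 * L \<and> spec_norm R \<le> 24/5 * L * s t"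
  proof (induction t rule: int_le_down_induct)
    case base
    show ?case using C_last L_nonneg s_nonneg[of T] assms by (intro exI[of _ 0]) simp
  next
    case (step i)
    then show ?case using C_decomposition_step by blast
  qed
  then show ?thesis using that by blast
qed

lemma C_gram_loewner_le:
  assumes "0 \<le> t" and "t \<le> T"
  shows "loewner_le (C t ** transpose (C t))
      ((8 * L\<^sup>2) *\<^sub>R (Y t ** transpose (Y t)) + (30 * L\<^sup>2 * (s t)\<^sup>2) *\<^sub>R mat 1)"
proof -
  obtain Q R where C: "C t = Y t ** Q + R" and Q: "spec_norm Q \<le> 6/5 * L"
    and R: "spec_norm R \<le> 24/5 * L * s t"
    using C_decomposition[OF assms] .
  have "norm (transpose (C t) *v x)
      \<le> (6/5 * L) * norm (transpose (Y t) *v x) + (24/5 * L * s t) * norm (transpose (mat 1) *v x)" for x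
  proof -
    have "transpose (C t) *v x = transpose Q *v (transpose (Y t) *v x) + transpose R *v x"
      unfolding C by (simp only: transpose_add matrix_transpose_mul matrix_vector_mult_add_rdistrib
          matrix_vector_mul_assoc)
    then have "norm (transpose (C t) *v x) \<le> norm (transpose Q *v (transpose (Y t) *v x)) + norm (transpose R *v x)"
      by (metis norm_triangle_ineq)
    also have "\<dots> \<le> spec_norm Q * norm (transpose (Y t) *v x) + spec_norm R * norm x"
      by (intro add_mono spec_norm_transpose_mult_vec)
    also have "\<dots> \<le> (6/5 * L) * norm (transpose (Y t) *v x) + (24/5 * L * s t) * norm x"
      using Q R by (intro add_mono mult_right_mono) auto
    finally show ?thesis by simp
  qed
  then have "loewner_le (C t ** transpose (C t))
      ((8 * L\<^sup>2) *\<^sub>R (Y t ** transpose (Y t)) + (30 * L\<^sup>2 * (s t)\<^sup>2) *\<^sub>R (mat 1 ** transpose (mat 1)))"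
    by (rule loewner_le_gram[where \<epsilon> = 4])
      (use L_nonneg s_nonneg[OF assms(1)] zero_le_power2[of L] zero_le_power2[of "L * s t"] in \<open>auto simp: power_mult_distrib power_divide\<close>)
  then show ?thesis by simp
qed

end

lemma optimistic_gradient_slowly_varying:
  fixes F :: "real^'n \<Rightarrow> real^'n" and DF :: "real^'n \<Rightarrow> real^'n^'n"
    and z w :: "int \<Rightarrow> real^'n" and A B C :: "int \<Rightarrow> real^'n^'n" and \<delta> :: "int \<Rightarrow> real"
  assumes lip: "\<forall>u v. norm (F u - F v) \<le> ell * norm (u - v)"
    and jac_lip: "\<forall>u v. spec_norm (DF u - DF v) \<le> Lam * norm (u - v)"
    and eta: "\<eta> > 0" and eta_ell: "\<eta> * ell \<le> 2 / 3"
    and z_rec: "\<forall>t\<ge>0. z (t + 1) = z t - (2 * \<eta>) *\<^sub>R F (z t) + \<eta> *\<^sub>R F (z (t - 1))"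
    and w_def: "\<forall>t\<ge>0. w t = z t + \<eta> *\<^sub>R F (z (t - 1))"
    and A_def: "\<forall>t\<ge>0. A t = integral {0..1} (\<lambda>\<alpha>. DF (w t - ((1 - \<alpha>) * \<eta>) *\<^sub>R F (z t)))"
    and \<delta>_def: "\<forall>t\<ge>0. \<delta> t = max (norm (F (z t))) (norm (F (z (t - 1))))"
    and C_T: "C T = 0"
    and C_rec: "\<forall>t. 0 \<le> t \<and> t \<le> T \<longrightarrow>
        C (t - 1) = matrix_inv (mat 1 - \<eta> *\<^sub>R A t + C t) ** ((\<eta> *\<^sub>R (\<eta> *\<^sub>R A t - C t)) ** B t)"
    and L0_pos: "L0 > 0"
    and L0_bd: "\<forall>t. 0 \<le> t \<and> t \<le> T \<longrightarrow> max (\<eta> * spec_norm (A t)) (\<eta> * spec_norm (B t)) \<le> L0"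
    and L0_small: "L0 \<le> sqrt (1 / 200)"
  shows "slowly_varying_backward_recursion
    (\<lambda>t. \<eta> *\<^sub>R A t) (\<lambda>t. \<eta> *\<^sub>R B t) C T L0 (\<lambda>t. \<eta>\<^sup>2 * Lam * \<delta> t)"
proof
  have "sqrt (1/200) \<le> sqrt ((1/14)\<^sup>2)" by (rule real_sqrt_le_mono) (simp add: power2_eq_square)
  then show "0 \<le> L0" "L0 \<le> 1/14" using L0_pos L0_small by auto
  show "spec_norm (\<eta> *\<^sub>R A t) \<le> L0" "spec_norm (\<eta> *\<^sub>R B t) \<le> L0" if "0 \<le> t" "t \<le> T" for t
    using L0_bd that eta by (auto simp: spec_norm_scaleR)
  show "C T = 0" by (rule C_T)
  show "C (t - 1) = matrix_inv (mat 1 - \<eta> *\<^sub>R A t + C t) ** ((\<eta> *\<^sub>R A t - C t) ** (\<eta> *\<^sub>R B t))"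
    if "0 \<le> t" "t \<le> T" for t
    using C_rec that by (simp add: matrix_scalar_ac)
  have Lam_nonneg: "0 \<le> Lam"
    by (rule lipschitz_constant_nonneg[of "\<lambda>u v. spec_norm (DF u - DF v)"])
      (use jac_lip in \<open>auto simp: spec_norm_nonneg\<close>)
  note increments = optimistic_iteration_increments[OF lip jac_lip eta eta_ell z_rec w_def A_def \<delta>_def]
  show "0 \<le> \<eta>\<^sup>2 * Lam * \<delta> t" if "0 \<le> t" for t
    using \<delta>_def that Lam_nonneg by (simp add: le_max_iff_disj)
  show "\<eta>\<^sup>2 * Lam * \<delta> (t + 1) \<le> 3 * (\<eta>\<^sup>2 * Lam * \<delta> t)" if "0 \<le> t" for t
    using mult_left_mono[OF increments(1)[OF that], of "\<eta>\<^sup>2 * Lam"] Lam_nonneg by simp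
  show "spec_norm (\<eta> *\<^sub>R A (t + 1) - \<eta> *\<^sub>R A t) \<le> 3 * (\<eta>\<^sup>2 * Lam * \<delta> t)" if "0 \<le> t" for t
    using mult_left_mono[OF increments(2)[OF that], of \<eta>] eta
    by (simp add: spec_norm_scaleR flip: scaleR_diff_right) (simp add: power2_eq_square mult_ac)
qed

theorem lemma15:
  fixes F :: "real^'n \<Rightarrow> real^'n"
    and DF :: "real^'n \<Rightarrow> real^'n^'n"
    and ell Lam \<eta> L0 :: real
    and z w :: "int \<Rightarrow> real^'n"
    and A B C :: "int \<Rightarrow> real^'n^'n"
    and \<delta> :: "int \<Rightarrow> real"
    and T :: int
  assumes mono: "\<forall>u v. 0 \<le> (F v - F u) \<bullet> (v - u)"
    and jac: "\<forall>u. (F has_derivative (\<lambda>h. DF u *v h)) (at u)"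
    and lip: "\<forall>u v. norm (F u - F v) \<le> ell * norm (u - v)"
    and jac_lip: "\<forall>u v. spec_norm (DF u - DF v) \<le> Lam * norm (u - v)"
    and eta: "\<eta> > 0"
    and z_rec: "\<forall>t\<ge>0. z (t + 1) = z t - (2 * \<eta>) *\<^sub>R F (z t) + \<eta> *\<^sub>R F (z (t - 1))"
    and w_def: "\<forall>t\<ge>0. w t = z t + \<eta> *\<^sub>R F (z (t - 1))"
    and A_def: "\<forall>t\<ge>0. A t = integral {0..1} (\<lambda>\<alpha>. DF (w t - ((1 - \<alpha>) * \<eta>) *\<^sub>R F (z t)))"
    and B_def: "\<forall>t\<ge>0. B t = integral {0..1} (\<lambda>\<alpha>. DF (w t - ((1 - \<alpha>) * \<eta>) *\<^sub>R F (z (t - 1))))"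
    and T1: "T \<ge> 1"
    and C_T: "C T = 0"
    and C_rec: "\<forall>t. 0 \<le> t \<and> t \<le> T \<longrightarrow>
        C (t - 1) = matrix_inv (mat 1 - \<eta> *\<^sub>R A t + C t) ** ((\<eta> *\<^sub>R (\<eta> *\<^sub>R A t - C t)) ** B t)"
    and \<delta>_def: "\<forall>t\<ge>0. \<delta> t = max (norm (F (z t))) (norm (F (z (t - 1))))"
    and L0_pos: "L0 > 0"
    and L0_bd: "\<forall>t. 0 \<le> t \<and> t \<le> T \<longrightarrow> max (\<eta> * spec_norm (A t)) (\<eta> * spec_norm (B t)) \<le> L0"
    and L0_small: "L0 \<le> sqrt (1 / 200)"
    and eta_ell: "\<eta> * ell \<le> 2 / 3"
  shows "(\<forall>t. 1 \<le> t \<and> t \<le> T \<longrightarrow> spec_norm (C t) \<le> 2 * L0\<^sup>2)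
    \<and> (\<forall>t. 1 \<le> t \<and> t \<le> T \<longrightarrow> invertible (mat 1 - \<eta> *\<^sub>R A t + C t)
           \<and> spec_norm (matrix_inv (mat 1 - \<eta> *\<^sub>R A t + C t)) \<le> sqrt 2)
    \<and> (\<forall>t. 1 \<le> t \<and> t \<le> T \<longrightarrow> spec_norm (\<eta> *\<^sub>R A t - C t) \<le> 2 * L0
           \<and> spec_norm (mat 1 - \<eta> *\<^sub>R A t + C t) \<le> 1 + 2 * L0)
    \<and> (\<forall>t. 0 \<le> t \<and> t < T \<longrightarrow>
          loewner_le
            (matrix_inv (mat 1 - \<eta> *\<^sub>R A (t + 1) + C (t + 1)) ** (\<eta> *\<^sub>R A (t + 1) - C (t + 1))
              ** transpose (\<eta> *\<^sub>R A (t + 1) - C (t + 1))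
              ** transpose (matrix_inv (mat 1 - \<eta> *\<^sub>R A (t + 1) + C (t + 1))))
            (3 *\<^sub>R ((\<eta> *\<^sub>R A (t + 1)) ** transpose (\<eta> *\<^sub>R A (t + 1))
                    + C (t + 1) ** transpose (C (t + 1)))))
    \<and> (\<forall>t. 0 \<le> t \<and> t < T \<longrightarrow>
          loewner_le (C t ** transpose (C t))
            ((8 * L0\<^sup>2) *\<^sub>R ((\<eta> *\<^sub>R A t) ** transpose (\<eta> *\<^sub>R A t))
             + (30 * L0\<^sup>2 * \<eta>\<^sup>2 * (\<eta> * Lam)\<^sup>2 * (\<delta> t)\<^sup>2) *\<^sub>R mat 1))"
proof -
  interpret slowly_varying_backward_recursion
    "\<lambda>t. \<eta> *\<^sub>R A t" "\<lambda>t. \<eta> *\<^sub>R B t" C T L0 "\<lambda>t. \<eta>\<^sup>2 * Lam * \<delta> t"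
    by (rule optimistic_gradient_slowly_varying[OF lip jac_lip eta eta_ell z_rec w_def A_def \<delta>_def
          C_T C_rec L0_pos L0_bd L0_small])
  have sqrt2: "12/11 \<le> sqrt 2" by (rule real_le_rsqrt) (simp add: power2_eq_square)
  have coefficient: "30 * L0\<^sup>2 * (\<eta>\<^sup>2 * Lam * \<delta> t)\<^sup>2 = 30 * L0\<^sup>2 * \<eta>\<^sup>2 * (\<eta> * Lam)\<^sup>2 * (\<delta> t)\<^sup>2" for t
    by (simp add: power_mult_distrib power2_eq_square mult_ac)
  show ?thesis
    using spec_norm_C invertible_resolvent order_trans[OF spec_norm_resolvent_inv sqrt2]
      spec_norm_Y_minus_C spec_norm_resolvent resolvent_gram_loewner_le
      C_gram_loewner_le[unfolded coefficient]
    by auto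
qed

end
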